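(* Assume (A1). For every $\lambda\in\mathcal I$, $n\ge1$ and $\epsilon\in(0,1)$, with $\mathbb P$-probability at least $1-\epsilon$, $$ \varrho_\lambda(\mathbb PD_n^S)\le\inf_{\varrho}\Big\{\varrho(\mathbb PD_n^S)+\frac2\lambda\mathcal K(\varrho,\pi_\theta\pi)\Big\}+\frac{2f(n,\lambda)}{\lambda}+\frac2\lambda\log\frac2\epsilon, $$ where the infimum is over all probability measures $\varrho$ on $\Theta\times\mathcal X^n$ and $\varrho(\mathbb PD_n^S)=\int\!\int d(S(X^n),S(y^n))\mathbb P(dy^n)\varrho(d\theta,dX^n)$.
   Context: Setting. $Y^n=(Y_1,\dots,Y_n)$ is the observed sample, i.i.d. on a space $\mathcal Y$; its law on $\mathcal Y^n$ is denoted $\mathbb P$. $\Theta$ carries a prior probability measure $\pi$, and $\{\pi_\theta:\theta\in\Theta\}$ is a measurable family of probability measures on $\mathcal X^n$; $\pi_\theta\pi$ denotes the joint law $\pi(d\theta)\pi_\theta(dX^n)$. $S:\mathcal X^n\cup\mathcal Y^n\to\mathcal S$ is a summary statistic into a metric space $(\mathcal S,d)$. $D_n^S=d(S(X^n),S(Y^n))$, $\mathbb P D_n^S=\int d(S(X^n),S(y^n))\mathbb P(dy^n)$. $\mathcal K$ is the Kullback–Leibler divergence. For $\lambda>0$ the ABC pseudo-posterior is $\varrho_\lambda(d\theta,dX^n)=Z_{\lambda,\pi}^{-1}e^{-\lambda d(S(X^n),S(Y^n))}\pi_\theta(dX^n)\pi(d\theta)$ with $Z_{\lambda,\pi}=\int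 e^{-\lambda d(S(X^n),S(Y^n))}\pi_\theta(dX^n)\pi(d\theta)$. $\mathcal I\subset(0,\infty)$. (A1) There is $f:\mathbb N\times\mathcal I\to[0,\infty)$ such that for all $\lambda\in\mathcal I$: $\int\!\!\int\!\!\int e^{-\lambda(D_n^S-\mathbb PD_n^S)}\,\mathbb P(dY^n)\pi_\theta(dX^n)\pi(d\theta)\le e^{f(n,\lambda)}$ and the same with $e^{-\lambda(\mathbb PD_n^S-D_n^S)}$. *)

theory Defs
  imports "HOL-Probability.Probability"
begin

definition KLdiv :: "'a measure \<Rightarrow> 'a measure \<Rightarrow> ennreal" where
  "KLdiv rho mu =
     (if absolutely_continuous mu rho \<and> sets rho = sets mu
         \<and> integrable rho (entropy_density (exp 1) mu rho)
      then ennreal (KL_divergence (exp 1) mu rho) else \<infinity>)"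

definition joint :: "'t measure \<Rightarrow> ('t \<Rightarrow> 'x measure) \<Rightarrow> 'x measure \<Rightarrow> ('t \<times> 'x) measure" where
  "joint prior K MX = prior \<bind> (\<lambda>\<theta>. K \<theta> \<bind> (\<lambda>x. return (prior \<Otimes>\<^sub>M MX) (\<theta>, x)))"

definition PD :: "'y measure \<Rightarrow> ('x \<Rightarrow> 's::metric_space) \<Rightarrow> ('y \<Rightarrow> 's) \<Rightarrow> 'x \<Rightarrow> ennreal" where
  "PD P SX SY x = (\<integral>\<^sup>+ y. ennreal (dist (SX x) (SY y)) \<partial>P)"

definition exp_neg_shift :: "real \<Rightarrow> real \<Rightarrow> ennreal \<Rightarrow> ennreal" where
  "exp_neg_shift l a b = (if b = \<infinity> then 0 else ennreal (exp (- l * (a - enn2real b))))"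

definition exp_pos_shift :: "real \<Rightarrow> real \<Rightarrow> ennreal \<Rightarrow> ennreal" where
  "exp_pos_shift l a b = (if b = \<infinity> then \<infinity> else ennreal (exp (- l * (enn2real b - a))))"

definition Zconst :: "('t \<times> 'x) measure \<Rightarrow> ('x \<Rightarrow> 's::metric_space) \<Rightarrow> ('y \<Rightarrow> 's) \<Rightarrow> real \<Rightarrow> 'y \<Rightarrow> ennreal" where
  "Zconst J SX SY l y = (\<integral>\<^sup>+ z. ennreal (exp (- l * dist (SX (snd z)) (SY y))) \<partial>J)"

definition abc_post :: "('t \<times> 'x) measure \<Rightarrow> ('x \<Rightarrow> 's::metric_space) \<Rightarrow> ('y \<Rightarrow> 's) \<Rightarrow> real \<Rightarrow> 'y \<Rightarrow> ('t \<times> 'x) measure" where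
  "abc_post J SX SY l y =
     density J (\<lambda>z. ennreal (exp (- l * dist (SX (snd z)) (SY y))) / Zconst J SX SY l y)"

end

theory Submission
  imports Defs
begin

text \<open>
  The ABC pseudo-posterior is the Gibbs measure \<open>e^(-\<lambda> D) \<pi> / Z\<close> with
  \<open>D = d(S(X^n), S(y))\<close>; let \<open>p\<close> be the expected discrepancy \<open>P D_n^S\<close>. If both exponential
  moments \<open>\<pi>(e^(\<lambda>(p - D)))\<close> and \<open>\<pi>(e^(\<lambda>(D - p)))\<close> are at most \<open>c\<close>, the Fenchel--Young
  inequality \<open>t q \<le> q ln q - q + e^t\<close> (i.e. the Donsker--Varadhan variational formula)
  gives \<open>\<rho>\<^sub>\<lambda>(p) \<le> (ln c - ln Z) / \<lambda>\<close> and, for every \<open>\<rho>\<close> with finite divergence,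
  \<open>-ln Z \<le> \<lambda> \<rho>(p) + 2 K(\<rho>, \<pi>) + ln c\<close>. Together they give the oracle inequality with
  remainder \<open>2 ln c / \<lambda>\<close>. By (A1), Fubini and Markov's inequality, both moments are at most
  \<open>c = 2 e^f(n, \<lambda>) / \<epsilon>\<close> outside an event of probability \<open>\<epsilon>\<close>.
\<close>

lemma fenchel_young_exp:
  fixes q t :: real
  assumes "0 \<le> q"
  shows "t * q \<le> q * ln q - q + exp t"
proof (cases "q = 0")
  case False
  then have q: "0 < q" using assms by simp
  have "1 + (t - ln q) \<le> exp t / q"
    using exp_ge_add_one_self[of "t - ln q"] q by (simp add: exp_diff)
  then have "q * (1 + (t - ln q)) \<le> exp t"
    using q by (simp add: field_simps)
  then show ?thesis by (simp add: algebra_simps)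
qed simp

lemma integrable_integral_le_of_nn_integral_le:
  fixes f :: "'a \<Rightarrow> real"
  assumes [measurable]: "f \<in> borel_measurable M" and nonneg: "\<And>z. 0 \<le> f z"
    and le: "(\<integral>\<^sup>+ z. ennreal (f z) \<partial>M) \<le> ennreal c" and "0 \<le> c"
  shows "integrable M f" "integral\<^sup>L M f \<le> c"
proof -
  show int: "integrable M f"
    using le by (intro integrableI_nonneg) (auto simp: nonneg top_unique less_top[symmetric])
  have "ennreal (integral\<^sup>L M f) \<le> ennreal c"
    using le nn_integral_eq_integral[OF int] nonneg by simp
  then show "integral\<^sup>L M f \<le> c" using \<open>0 \<le> c\<close> by simp
qed

lemma gibbs_variational_ineq_sum:
  fixes r g h :: "'a \<Rightarrow> real"
  assumes r_nonneg: "\<And>z. 0 \<le> r z" and r: "integrable M r" "integral\<^sup>L M r = 1"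
    and r_ln_r: "integrable M (\<lambda>z. r z * ln (r z))"
    and rgh: "integrable M (\<lambda>z. r z * (g z + h z))"
    and g: "integrable M (\<lambda>z. exp (g z))" "integral\<^sup>L M (\<lambda>z. exp (g z)) \<le> a" "0 < a"
    and h: "integrable M (\<lambda>z. exp (h z))" "integral\<^sup>L M (\<lambda>z. exp (h z)) \<le> b" "0 < b"
  shows "integral\<^sup>L M (\<lambda>z. r z * (g z + h z))
    \<le> 2 * integral\<^sup>L M (\<lambda>z. r z * ln (r z)) + ln a + ln b"
proof -
  have "(g z - ln a) * r z + (h z - ln b) * r z
      \<le> 2 * (r z * ln (r z)) - 2 * r z + exp (g z) / a + exp (h z) / b" for z
    using fenchel_young_exp[OF r_nonneg, of "g z - ln a" z] fenchel_young_exp[OF r_nonneg, of "h z - ln b" z]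
    by (simp add: exp_diff g h)
  then have "integral\<^sup>L M (\<lambda>z. r z * (g z + h z) - (ln a + ln b) * r z)
      \<le> integral\<^sup>L M (\<lambda>z. 2 * (r z * ln (r z)) - 2 * r z + exp (g z) / a + exp (h z) / b)"
    using rgh r r_ln_r g h
    by (intro integral_mono Bochner_Integration.integrable_add Bochner_Integration.integrable_diff
        integrable_mult_right integrable_divide_zero) (auto simp: algebra_simps)
  also have "\<dots> \<le> 2 * integral\<^sup>L M (\<lambda>z. r z * ln (r z)) - 2 + 1 + 1"
  proof -
    have "integral\<^sup>L M (\<lambda>z. exp (g z)) / a \<le> 1" "integral\<^sup>L M (\<lambda>z. exp (h z)) / b \<le> 1"
      using g h by simp_all
    then show ?thesis using r r_ln_r g h by (simp, linarith)
  qed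
  finally show ?thesis using assms by simp
qed

lemma gibbs_mean_le:
  fixes M :: "'a measure" and D p :: "'a \<Rightarrow> real" and lam c :: real
  defines "Z \<equiv> integral\<^sup>L M (\<lambda>z. exp (- lam * D z))"
  assumes [measurable]: "p \<in> borel_measurable M" and p_nonneg: "\<And>z. 0 \<le> p z"
    and e: "integrable M (\<lambda>z. exp (- lam * D z))" and Z: "0 < Z"
    and lam: "0 < lam" and c: "0 < c"
    and g: "integrable M (\<lambda>z. exp (lam * (p z - D z)))"
      "integral\<^sup>L M (\<lambda>z. exp (lam * (p z - D z))) \<le> c"
  shows "integrable M (\<lambda>z. exp (- lam * D z) / Z * p z)"
    and "integral\<^sup>L M (\<lambda>z. exp (- lam * D z) / Z * p z) \<le> (ln c - ln Z) / lam"
proof -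
  define q where "q z = exp (- lam * D z) / Z" for z
  have q_nonneg: "0 \<le> q z" for z using Z by (simp add: q_def)
  have q_int: "integrable M q" "integral\<^sup>L M q = 1"
    using e Z by (simp_all add: q_def[abs_def] Z_def)
  have pointwise: "lam * (q z * p z) \<le> (ln c - ln Z) * q z - q z + exp (lam * (p z - D z)) / c" for z
  proof -
    have "ln (q z) = - lam * D z - ln Z" using Z by (simp add: q_def ln_div)
    moreover have "exp (lam * (p z - D z) - ln c) = exp (lam * (p z - D z)) / c"
      using c by (simp add: exp_diff)
    ultimately show ?thesis
      using fenchel_young_exp[OF q_nonneg, of "lam * (p z - D z) - ln c" z]
      by (simp only:) (simp add: algebra_simps)
  qed
  have bound_int: "integrable M (\<lambda>z. ((ln c - ln Z) * q z - q z + exp (lam * (p z - D z)) / c) / lam)"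
    using q_int g by auto
  have qp_int: "integrable M (\<lambda>z. q z * p z)"
  proof (rule Bochner_Integration.integrable_bound[OF bound_int])
    show "AE z in M. norm (q z * p z) \<le> norm (((ln c - ln Z) * q z - q z + exp (lam * (p z - D z)) / c) / lam)"
      using pointwise lam q_nonneg p_nonneg by (auto simp: field_simps intro!: order.trans[OF _ abs_ge_self])
  qed (use e in \<open>simp add: q_def\<close>)
  have "lam * integral\<^sup>L M (\<lambda>z. q z * p z)
      \<le> integral\<^sup>L M (\<lambda>z. (ln c - ln Z) * q z - q z + exp (lam * (p z - D z)) / c)"
    using qp_int q_int g pointwise by (subst integral_mult_right_zero[symmetric]) (intro integral_mono; auto)
  also have "\<dots> \<le> ln c - ln Z"
    using q_int g c by (simp add: divide_le_eq_1)
  finally have "integral\<^sup>L M (\<lambda>z. q z * p z) \<le> (ln c - ln Z) / lam"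
    using lam by (simp add: field_simps)
  with qp_int show "integrable M (\<lambda>z. exp (- lam * D z) / Z * p z)"
    "integral\<^sup>L M (\<lambda>z. exp (- lam * D z) / Z * p z) \<le> (ln c - ln Z) / lam"
    by (simp_all add: q_def)
qed

lemma (in sigma_finite_measure) KLdiv_finite_density:
  fixes \<rho> :: "'a measure"
  assumes \<rho>: "prob_space \<rho>" and KL: "KLdiv \<rho> M \<noteq> \<infinity>"
  obtains r where "r \<in> borel_measurable M" "\<And>z. 0 \<le> r z"
    "\<rho> = density M (\<lambda>z. ennreal (r z))" "integrable M r" "integral\<^sup>L M r = 1"
    "integrable M (\<lambda>z. r z * ln (r z))"
    "KLdiv \<rho> M = ennreal (integral\<^sup>L M (\<lambda>z. r z * ln (r z)))"
proof
  interpret \<rho>: prob_space \<rho> by fact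
  from KL have ac: "absolutely_continuous M \<rho>" and sets: "sets \<rho> = sets M"
    and ent: "integrable \<rho> (entropy_density (exp 1) M \<rho>)"
    and KL_eq: "KLdiv \<rho> M = ennreal (KL_divergence (exp 1) M \<rho>)"
    unfolding KLdiv_def by (auto split: if_splits)
  define r where "r z = enn2real (RN_deriv M \<rho> z)" for z
  show r_meas[measurable]: "r \<in> borel_measurable M" unfolding r_def by measurable
  show r_nonneg: "0 \<le> r z" for z unfolding r_def by simp
  have "AE z in M. RN_deriv M \<rho> z \<noteq> \<infinity>"
    using RN_deriv_finite[OF \<rho>.sigma_finite_measure_axioms ac sets] .
  then have "density M (RN_deriv M \<rho>) = density M (\<lambda>z. ennreal (r z))"
    by (intro density_cong) (auto simp: r_def less_top)
  then show \<rho>_eq: "\<rho> = density M (\<lambda>z. ennreal (r z))"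
    using density_RN_deriv[OF ac sets] by simp
  have ent_eq: "entropy_density (exp 1) M \<rho> z = ln (r z)" for z
    by (simp add: entropy_density_def r_def log_def)
  show "integrable M (\<lambda>z. r z * ln (r z))"
    using ent integrable_density[of "\<lambda>z. ln (r z)" M r] r_meas r_nonneg
    unfolding ent_eq[abs_def] by (simp flip: \<rho>_eq)
  show "KLdiv \<rho> M = ennreal (integral\<^sup>L M (\<lambda>z. r z * ln (r z)))"
    unfolding KL_eq KL_divergence_def ent_eq[abs_def]
    by (subst \<rho>_eq, subst integral_density) (auto simp: r_meas r_nonneg)
  have "emeasure (density M (\<lambda>z. ennreal (r z))) (space M) = 1"
    using \<rho>.emeasure_space_1 sets sets_eq_imp_space_eq \<rho>_eq by metis
  then have r1: "(\<integral>\<^sup>+ z. ennreal (r z) \<partial>M) = 1"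
    by (simp add: emeasure_density nn_integral_density r_meas)
  show "integrable M r" by (rule integrableI_nonneg) (auto simp: r1 r_nonneg r_meas)
  show "integral\<^sup>L M r = 1" by (subst integral_eq_nn_integral) (auto simp: r1 r_nonneg r_meas)
qed

lemma (in prob_space)
  fixes D :: "'a \<Rightarrow> real"
  assumes "D \<in> borel_measurable M" "\<And>z. 0 \<le> D z" "0 \<le> lam"
  shows integrable_exp_neg_mult: "integrable M (\<lambda>z. exp (- lam * D z))"
    and integral_exp_neg_mult_pos: "0 < integral\<^sup>L M (\<lambda>z. exp (- lam * D z))"
proof -
  show int: "integrable M (\<lambda>z. exp (- lam * D z))"
    by (rule integrable_const_bound[where B=1]) (use assms in auto)
  show "0 < integral\<^sup>L M (\<lambda>z. exp (- lam * D z))"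
    using integral_less_AE_space[of "\<lambda>_. 0" "\<lambda>z. exp (- lam * D z)"] int emeasure_space_1 by simp
qed

lemma (in prob_space) gibbs_posterior_mean_le:
  fixes D p :: "'a \<Rightarrow> real" and lam c :: real
  defines "Z \<equiv> integral\<^sup>L M (\<lambda>z. exp (- lam * D z))"
  assumes D[measurable]: "D \<in> borel_measurable M" and p[measurable]: "p \<in> borel_measurable M"
    and D_nonneg: "\<And>z. 0 \<le> D z" and p_nonneg: "\<And>z. 0 \<le> p z"
    and lam: "0 < lam" and c: "0 < c"
    and pos: "(\<integral>\<^sup>+ z. ennreal (exp (lam * (p z - D z))) \<partial>M) \<le> ennreal c"
  shows "(\<integral>\<^sup>+ z. ennreal (p z) \<partial>density M (\<lambda>z. ennreal (exp (- lam * D z)) /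
            (\<integral>\<^sup>+ z. ennreal (exp (- lam * D z)) \<partial>M)))
    \<le> ennreal ((ln c - ln Z) / lam)"
proof -
  note e_int = integrable_exp_neg_mult[OF D D_nonneg less_imp_le[OF lam]]
  have Z: "0 < Z" unfolding Z_def using integral_exp_neg_mult_pos[OF D D_nonneg less_imp_le[OF lam]] .
  have "integrable M (\<lambda>z. exp (lam * (p z - D z)))" "integral\<^sup>L M (\<lambda>z. exp (lam * (p z - D z))) \<le> c"
    using integrable_integral_le_of_nn_integral_le[OF _ _ pos] c by auto
  note mean = gibbs_mean_le[where M=M and D=D and p=p and lam=lam and c=c, folded Z_def, OF p p_nonneg e_int Z lam c this]
  have "(\<integral>\<^sup>+ z. ennreal (exp (- lam * D z)) \<partial>M) = ennreal Z"
    unfolding Z_def using lam by (intro nn_integral_eq_integral e_int) auto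
  then have "(\<integral>\<^sup>+ z. ennreal (p z) \<partial>density M (\<lambda>z. ennreal (exp (- lam * D z)) /
            (\<integral>\<^sup>+ z. ennreal (exp (- lam * D z)) \<partial>M)))
      = (\<integral>\<^sup>+ z. ennreal (exp (- lam * D z) / Z * p z) \<partial>M)"
    using Z p_nonneg
    by (subst nn_integral_density) (auto simp: divide_ennreal simp flip: ennreal_mult' intro!: nn_integral_cong)
  also have "\<dots> = ennreal (integral\<^sup>L M (\<lambda>z. exp (- lam * D z) / Z * p z))"
    using mean(1) Z p_nonneg by (intro nn_integral_eq_integral) auto
  also have "\<dots> \<le> ennreal ((ln c - ln Z) / lam)"
    using mean(2) by (rule ennreal_leI)
  finally show ?thesis .
qed

lemma (in prob_space) log_partition_change_of_measure:
  fixes D p :: "'a \<Rightarrow> real" and lam c :: real and \<rho> :: "'a measure"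
  defines "Z \<equiv> integral\<^sup>L M (\<lambda>z. exp (- lam * D z))"
  assumes D[measurable]: "D \<in> borel_measurable M" and [measurable]: "p \<in> borel_measurable M"
    and D_nonneg: "\<And>z. 0 \<le> D z" and p_nonneg: "\<And>z. 0 \<le> p z"
    and lam: "0 < lam" and c: "1 \<le> c"
    and neg: "(\<integral>\<^sup>+ z. ennreal (exp (lam * (D z - p z))) \<partial>M) \<le> ennreal c"
    and \<rho>: "prob_space \<rho>"
  shows "ennreal ((ln c - ln Z) / lam)
    \<le> (\<integral>\<^sup>+ z. ennreal (p z) \<partial>\<rho>) + ennreal (2 / lam) * KLdiv \<rho> M + ennreal (2 * ln c / lam)"
proof (cases "KLdiv \<rho> M = \<infinity> \<or> (\<integral>\<^sup>+ z. ennreal (p z) \<partial>\<rho>) = \<infinity>")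
  case False
  then obtain r where r[measurable]: "r \<in> borel_measurable M" and r_nonneg: "\<And>z. 0 \<le> r z"
    and \<rho>_eq: "\<rho> = density M (\<lambda>z. ennreal (r z))"
    and r_int: "integrable M r" "integral\<^sup>L M r = 1" "integrable M (\<lambda>z. r z * ln (r z))"
    and KL: "KLdiv \<rho> M = ennreal (integral\<^sup>L M (\<lambda>z. r z * ln (r z)))"
    using KLdiv_finite_density[OF \<rho>] by blast
  define R where "R = integral\<^sup>L M (\<lambda>z. r z * p z)"
  define K where "K = integral\<^sup>L M (\<lambda>z. r z * ln (r z))"
  have p_\<rho>: "(\<integral>\<^sup>+ z. ennreal (p z) \<partial>\<rho>) = (\<integral>\<^sup>+ z. ennreal (r z * p z) \<partial>M)"
    unfolding \<rho>_eq by (auto simp: nn_integral_density ennreal_mult r_nonneg p_nonneg intro!: nn_integral_cong)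
  have rp_int: "integrable M (\<lambda>z. r z * p z)"
    by (rule integrableI_nonneg) (use False p_\<rho> in \<open>auto simp: r_nonneg p_nonneg less_top\<close>)
  then have R: "(\<integral>\<^sup>+ z. ennreal (p z) \<partial>\<rho>) = ennreal R" "0 \<le> R"
    unfolding p_\<rho> R_def by (auto simp: nn_integral_eq_integral r_nonneg p_nonneg)
  \<comment> \<open>only \<open>r p\<close> is known to be integrable, so test \<open>r\<close> against \<open>-lam D\<close> and
    \<open>lam (D - p)\<close> simultaneously: their sum is \<open>-lam p\<close>\<close>
  have "- lam * R \<le> 2 * K + ln Z + ln c"
    using gibbs_variational_ineq_sum[OF r_nonneg r_int, of "\<lambda>z. - lam * D z" "\<lambda>z. lam * (D z - p z)" Z c]
      rp_int integrable_exp_neg_mult[OF D D_nonneg] integral_exp_neg_mult_pos[OF D D_nonneg]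
      integrable_integral_le_of_nn_integral_le[OF _ _ neg] lam c
    by (simp add: algebra_simps Z_def R_def K_def)
  then have "(ln c - ln Z) / lam \<le> R + 2 / lam * max 0 K + 2 * ln c / lam"
    using lam by (simp add: pos_divide_le_eq algebra_simps)
  then have "ennreal ((ln c - ln Z) / lam) \<le> ennreal (R + 2 / lam * max 0 K + 2 * ln c / lam)"
    by (rule ennreal_leI)
  also have "\<dots> = ennreal R + ennreal (2 / lam) * ennreal K + ennreal (2 * ln c / lam)"
  proof -
    have "ennreal (2 / lam * max 0 K) = ennreal (2 / lam) * ennreal K"
      using lam by (subst ennreal_mult) auto
    moreover have "0 \<le> 2 * max 0 K / lam" "0 \<le> 2 * ln c / lam" using lam c by auto
    ultimately show ?thesis using R by simp
  qed
  finally show ?thesis unfolding R KL K_def[symmetric] .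
qed (use lam in \<open>auto simp: ennreal_mult_eq_top_iff\<close>)

lemma (in prob_space) gibbs_posterior_oracle_ineq:
  fixes D p :: "'a \<Rightarrow> real" and lam c :: real and \<rho> :: "'a measure"
  assumes [measurable]: "D \<in> borel_measurable M" "p \<in> borel_measurable M"
    and "\<And>z. 0 \<le> D z" "\<And>z. 0 \<le> p z" "0 < lam" "1 \<le> c"
    and "(\<integral>\<^sup>+ z. ennreal (exp (lam * (p z - D z))) \<partial>M) \<le> ennreal c"
    and "(\<integral>\<^sup>+ z. ennreal (exp (lam * (D z - p z))) \<partial>M) \<le> ennreal c"
    and "prob_space \<rho>"
  shows "(\<integral>\<^sup>+ z. ennreal (p z) \<partial>density M (\<lambda>z. ennreal (exp (- lam * D z)) /
            (\<integral>\<^sup>+ z. ennreal (exp (- lam * D z)) \<partial>M)))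
    \<le> (\<integral>\<^sup>+ z. ennreal (p z) \<partial>\<rho>) + ennreal (2 / lam) * KLdiv \<rho> M + ennreal (2 * ln c / lam)"
  using assms by (intro order.trans[OF gibbs_posterior_mean_le log_partition_change_of_measure]) auto

lemma INF_ennreal_add_const_image:
  fixes f :: "'b \<Rightarrow> ennreal"
  shows "(INF i\<in>I. f i + c) = (INF i\<in>I. f i) + c"
proof (cases "I = {}")
  case False
  have "continuous (at_right (Inf (f ` I))) (\<lambda>x. x + c)"
    by (intro continuous_intros)
  then show ?thesis
    using continuous_at_Inf_mono[of "\<lambda>x. x + c" "f ` I"] False
    by (simp add: mono_def image_comp)
qed simp

lemma measurable_exp_neg_shift[measurable (raw)]:
  assumes [measurable]: "f \<in> borel_measurable M" "g \<in> borel_measurable M"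
  shows "(\<lambda>x. exp_neg_shift l (f x) (g x)) \<in> borel_measurable M"
  unfolding exp_neg_shift_def by measurable

lemma measurable_exp_pos_shift[measurable (raw)]:
  assumes [measurable]: "f \<in> borel_measurable M" "g \<in> borel_measurable M"
  shows "(\<lambda>x. exp_pos_shift l (f x) (g x)) \<in> borel_measurable M"
  unfolding exp_pos_shift_def by measurable

lemma (in prob_space) gibbs_posterior_oracle_ineq_INF:
  fixes D :: "'a \<Rightarrow> real" and L :: "'a \<Rightarrow> ennreal"
  assumes [measurable]: "D \<in> borel_measurable M" "L \<in> borel_measurable M"
    and D_nonneg: "\<And>z. 0 \<le> D z" and lam: "0 < lam" and c: "1 \<le> c"
    and neg_shift: "(\<integral>\<^sup>+ z. exp_neg_shift lam (D z) (L z) \<partial>M) \<le> ennreal c"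
    and pos_shift: "(\<integral>\<^sup>+ z. exp_pos_shift lam (D z) (L z) \<partial>M) \<le> ennreal c"
  shows "(\<integral>\<^sup>+ z. L z \<partial>density M (\<lambda>z. ennreal (exp (- lam * D z)) /
            (\<integral>\<^sup>+ z. ennreal (exp (- lam * D z)) \<partial>M)))
    \<le> (INF \<rho>\<in>{\<rho>. prob_space \<rho> \<and> sets \<rho> = sets M}. (\<integral>\<^sup>+ z. L z \<partial>\<rho>) + ennreal (2 / lam) * KLdiv \<rho> M)
      + ennreal (2 * ln c / lam)"
proof -
  define p where "p z = enn2real (L z)" for z
  have "AE z in M. exp_pos_shift lam (D z) (L z) \<noteq> \<infinity>"
    by (rule nn_integral_PInf_AE) (use pos_shift in \<open>auto simp: top_unique\<close>)
  then have L_eq: "AE z in M. L z = ennreal (p z)"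
    by eventually_elim (auto simp: exp_pos_shift_def p_def less_top split: if_splits)
  have [measurable]: "p \<in> borel_measurable M" unfolding p_def by measurable
  have p_nonneg: "0 \<le> p z" for z by (simp add: p_def)
  have "AE z in M. ennreal (exp (lam * (p z - D z))) = exp_neg_shift lam (D z) (L z)"
    using L_eq by eventually_elim (simp add: exp_neg_shift_def p_nonneg algebra_simps)
  then have "(\<integral>\<^sup>+ z. ennreal (exp (lam * (p z - D z))) \<partial>M) = (\<integral>\<^sup>+ z. exp_neg_shift lam (D z) (L z) \<partial>M)"
    by (rule nn_integral_cong_AE)
  with neg_shift have pos: "(\<integral>\<^sup>+ z. ennreal (exp (lam * (p z - D z))) \<partial>M) \<le> ennreal c" by simp
  have "(\<integral>\<^sup>+ z. ennreal (exp (lam * (D z - p z))) \<partial>M) \<le> (\<integral>\<^sup>+ z. exp_pos_shift lam (D z) (L z) \<partial>M)"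
    by (intro nn_integral_mono) (simp add: exp_pos_shift_def p_def algebra_simps)
  with pos_shift have neg: "(\<integral>\<^sup>+ z. ennreal (exp (lam * (D z - p z))) \<partial>M) \<le> ennreal c" by simp
  have "(\<integral>\<^sup>+ z. L z \<partial>density M (\<lambda>z. ennreal (exp (- lam * D z)) /
            (\<integral>\<^sup>+ z. ennreal (exp (- lam * D z)) \<partial>M)))
      \<le> (\<integral>\<^sup>+ z. L z \<partial>\<rho>) + ennreal (2 / lam) * KLdiv \<rho> M + ennreal (2 * ln c / lam)"
    if \<rho>: "prob_space \<rho>" for \<rho>
  proof (cases "KLdiv \<rho> M = \<infinity>")
    case False
    then have ac: "absolutely_continuous M \<rho>" and sets: "sets \<rho> = sets M"
      by (auto simp: KLdiv_def split: if_splits)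
    have "(\<integral>\<^sup>+ z. L z \<partial>\<rho>) = (\<integral>\<^sup>+ z. ennreal (p z) \<partial>\<rho>)"
      by (rule nn_integral_cong_AE[OF absolutely_continuous_AE[OF sets ac L_eq]])
    moreover have "(\<integral>\<^sup>+ z. L z \<partial>density M (\<lambda>z. ennreal (exp (- lam * D z)) /
            (\<integral>\<^sup>+ z. ennreal (exp (- lam * D z)) \<partial>M)))
      = (\<integral>\<^sup>+ z. ennreal (p z) \<partial>density M (\<lambda>z. ennreal (exp (- lam * D z)) /
            (\<integral>\<^sup>+ z. ennreal (exp (- lam * D z)) \<partial>M)))"
      using L_eq by (intro nn_integral_cong_AE) (auto simp: AE_density)
    ultimately show ?thesis
      using gibbs_posterior_oracle_ineq[of D p lam c \<rho>] D_nonneg p_nonneg lam c pos neg \<rho>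
      by simp
  qed (use lam in \<open>simp add: ennreal_mult_eq_top_iff\<close>)
  then show ?thesis
    by (subst INF_ennreal_add_const_image[symmetric]) (auto intro!: INF_greatest)
qed

lemma abc_post_oracle_ineq:
  fixes J :: "('t \<times> 'x) measure" and SX :: "'x \<Rightarrow> 's::{metric_space, second_countable_topology}"
    and SY :: "'y \<Rightarrow> 's"
    and L :: "'x \<Rightarrow> ennreal"
  assumes "prob_space J" and [measurable]: "(\<lambda>z. SX (snd z)) \<in> borel_measurable J"
    "(\<lambda>z. L (snd z)) \<in> borel_measurable J"
    and "0 < lam" "1 \<le> c"
    and "(\<integral>\<^sup>+ z. exp_neg_shift lam (dist (SX (snd z)) (SY y)) (L (snd z)) \<partial>J) \<le> ennreal c"
    and "(\<integral>\<^sup>+ z. exp_pos_shift lam (dist (SX (snd z)) (SY y)) (L (snd z)) \<partial>J) \<le> ennreal c"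
  shows "(\<integral>\<^sup>+ z. L (snd z) \<partial>abc_post J SX SY lam y)
    \<le> (INF \<rho>\<in>{\<rho>. prob_space \<rho> \<and> sets \<rho> = sets J}. (\<integral>\<^sup>+ z. L (snd z) \<partial>\<rho>) + ennreal (2 / lam) * KLdiv \<rho> J)
      + ennreal (2 * ln c / lam)"
  unfolding abc_post_def Zconst_def
  by (rule prob_space.gibbs_posterior_oracle_ineq_INF[OF assms(1) _ assms(3) _ assms(4-)]) simp_all

lemma (in prob_space) prob_nn_integral_Markov:
  fixes G :: "'a \<Rightarrow> ennreal"
  assumes [measurable]: "G \<in> borel_measurable M"
    and G: "(\<integral>\<^sup>+ y. G y \<partial>M) \<le> ennreal a" and a: "0 \<le> a" and c: "0 < c"
  shows "prob {y \<in> space M. ennreal c \<le> G y} \<le> a / c"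
proof -
  define N where "N = {y \<in> space M. ennreal c \<le> G y}"
  have [measurable]: "N \<in> events" unfolding N_def by measurable
  have "ennreal (c * prob N) = (\<integral>\<^sup>+ y. ennreal c * indicator N y \<partial>M)"
    using c by (simp add: nn_integral_cmult_indicator emeasure_eq_measure ennreal_mult)
  also have "\<dots> \<le> (\<integral>\<^sup>+ y. G y \<partial>M)"
    by (intro nn_integral_mono) (auto simp: N_def split: split_indicator)
  also note G
  finally have "c * prob N \<le> a"
    using a by (simp add: ennreal_le_iff)
  then show ?thesis using c by (simp add: N_def field_simps)
qed

lemma (in prob_space) exists_event_both_nn_integrals_bounded:
  fixes G1 G2 :: "'a \<Rightarrow> ennreal"
  assumes [measurable]: "G1 \<in> borel_measurable M" "G2 \<in> borel_measurable M"
    and G1: "(\<integral>\<^sup>+ y. G1 y \<partial>M) \<le> ennreal a" and G2: "(\<integral>\<^sup>+ y. G2 y \<partial>M) \<le> ennreal a"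
    and a: "0 < a" and \<epsilon>: "0 < \<epsilon>"
  shows "\<exists>A\<in>events. 1 - \<epsilon> \<le> prob A \<and> (\<forall>y\<in>A. G1 y \<le> 2 * a / \<epsilon> \<and> G2 y \<le> 2 * a / \<epsilon>)"
proof -
  define c where "c = 2 * a / \<epsilon>"
  have c: "0 < c" using a \<epsilon> by (simp add: c_def)
  define N where "N G = {y \<in> space M. ennreal c \<le> G y}" for G :: "'a \<Rightarrow> ennreal"
  have N_prob: "prob (N G1) \<le> \<epsilon> / 2" "prob (N G2) \<le> \<epsilon> / 2"
    using prob_nn_integral_Markov[OF _ G1 _ c] prob_nn_integral_Markov[OF _ G2 _ c] a \<epsilon>
    by (simp_all add: N_def c_def)
  define A where "A = space M - (N G1 \<union> N G2)"
  have A: "A \<in> events" unfolding A_def N_def by measurable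
  have "prob A = 1 - prob (N G1 \<union> N G2)"
    unfolding A_def by (rule prob_compl) (auto simp: N_def)
  moreover have "prob (N G1 \<union> N G2) \<le> prob (N G1) + prob (N G2)"
    by (rule measure_Un_le) (auto simp: N_def)
  ultimately have "1 - \<epsilon> \<le> prob A" using N_prob by simp
  moreover have "G1 y \<le> c \<and> G2 y \<le> c" if "y \<in> A" for y
    using that by (auto simp: A_def N_def not_le intro: less_imp_le)
  ultimately show ?thesis using A unfolding c_def by blast
qed

context
  fixes prior :: "'t measure" and X :: "'x measure" and K :: "'t \<Rightarrow> 'x measure"
  assumes prior: "prob_space prior" and K: "K \<in> prior \<rightarrow>\<^sub>M prob_algebra X"
begin

private lemma joint_kernel_measurable:
  "(\<lambda>\<theta>. K \<theta> \<bind> (\<lambda>x. return (prior \<Otimes>\<^sub>M X) (\<theta>, x))) \<in> prior \<rightarrow>\<^sub>M prob_algebra (prior \<Otimes>\<^sub>M X)"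
  by (rule measurable_bind_prob_space2[OF K]) (simp add: measurable_return_prob_space)

lemma prob_space_joint: "prob_space (joint prior K X)"
  unfolding joint_def using prior
  by (intro prob_space_bind'[OF _ joint_kernel_measurable]) (simp add: space_prob_algebra)

lemma sets_joint: "sets (joint prior K X) = sets (prior \<Otimes>\<^sub>M X)"
  unfolding joint_def using prior
  by (intro sets_bind'[OF _ joint_kernel_measurable]) (simp add: space_prob_algebra)

lemma nn_integral_joint_snd:
  assumes [measurable]: "H \<in> borel_measurable X"
  shows "(\<integral>\<^sup>+ z. H (snd z) \<partial>joint prior K X) = (\<integral>\<^sup>+ \<theta>. \<integral>\<^sup>+ x. H x \<partial>K \<theta> \<partial>prior)"
proof -
  have "(\<integral>\<^sup>+ z. H (snd z) \<partial>joint prior K X)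
      = (\<integral>\<^sup>+ \<theta>. \<integral>\<^sup>+ z. H (snd z) \<partial>(K \<theta> \<bind> (\<lambda>x. return (prior \<Otimes>\<^sub>M X) (\<theta>, x))) \<partial>prior)"
    unfolding joint_def
    by (rule nn_integral_bind[OF _ measurable_prob_algebraD[OF joint_kernel_measurable]]) measurable
  also have "\<dots> = (\<integral>\<^sup>+ \<theta>. \<integral>\<^sup>+ x. H x \<partial>K \<theta> \<partial>prior)"
  proof (intro nn_integral_cong)
    fix \<theta> assume \<theta>: "\<theta> \<in> space prior"
    then have sets_K: "sets (K \<theta>) = sets X"
      using measurable_space[OF K] by (simp add: space_prob_algebra)
    have "(\<lambda>x. return (prior \<Otimes>\<^sub>M X) (\<theta>, x)) \<in> K \<theta> \<rightarrow>\<^sub>M subprob_algebra (prior \<Otimes>\<^sub>M X)"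
      unfolding measurable_cong_sets[OF sets_K refl] using \<theta> by measurable
    then have "(\<integral>\<^sup>+ z. H (snd z) \<partial>(K \<theta> \<bind> (\<lambda>x. return (prior \<Otimes>\<^sub>M X) (\<theta>, x))))
        = (\<integral>\<^sup>+ x. \<integral>\<^sup>+ z. H (snd z) \<partial>return (prior \<Otimes>\<^sub>M X) (\<theta>, x) \<partial>K \<theta>)"
      by (rule nn_integral_bind[rotated]) measurable
    also have "\<dots> = (\<integral>\<^sup>+ x. H x \<partial>K \<theta>)"
      using \<theta> sets_eq_imp_space_eq[OF sets_K]
      by (intro nn_integral_cong) (simp add: nn_integral_return space_pair_measure)
    finally show "(\<integral>\<^sup>+ z. H (snd z) \<partial>(K \<theta> \<bind> (\<lambda>x. return (prior \<Otimes>\<^sub>M X) (\<theta>, x))))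
        = (\<integral>\<^sup>+ x. H x \<partial>K \<theta>)" .
  qed
  finally show ?thesis .
qed

lemma nn_integral_joint_Fubini:
  fixes P :: "'y measure" and E :: "'x \<Rightarrow> 'y \<Rightarrow> ennreal"
  assumes P: "sigma_finite_measure P" and [measurable]: "case_prod E \<in> borel_measurable (X \<Otimes>\<^sub>M P)"
  shows "(\<lambda>y. \<integral>\<^sup>+ z. E (snd z) y \<partial>joint prior K X) \<in> borel_measurable P"
    and "(\<integral>\<^sup>+ y. \<integral>\<^sup>+ z. E (snd z) y \<partial>joint prior K X \<partial>P) = (\<integral>\<^sup>+ \<theta>. \<integral>\<^sup>+ x. \<integral>\<^sup>+ y. E x y \<partial>P \<partial>K \<theta> \<partial>prior)"
proof -
  interpret J: prob_space "joint prior K X" by (rule prob_space_joint)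
  interpret pair_sigma_finite "joint prior K X" P
    by (intro pair_sigma_finite.intro J.sigma_finite_measure_axioms P)
  have [measurable]: "(\<lambda>(z, y). E (snd z) y) \<in> borel_measurable (joint prior K X \<Otimes>\<^sub>M P)"
    unfolding measurable_cong_sets[OF sets_pair_measure_cong[OF sets_joint refl] refl] by measurable
  have "(\<lambda>(y, z). E (snd z) y) \<in> borel_measurable (P \<Otimes>\<^sub>M joint prior K X)"
    unfolding measurable_cong_sets[OF sets_pair_measure_cong[OF refl sets_joint] refl] by measurable
  then show "(\<lambda>y. \<integral>\<^sup>+ z. E (snd z) y \<partial>joint prior K X) \<in> borel_measurable P"
    by (rule J.borel_measurable_nn_integral)
  have "(\<integral>\<^sup>+ y. \<integral>\<^sup>+ z. E (snd z) y \<partial>joint prior K X \<partial>P) = (\<integral>\<^sup>+ z. \<integral>\<^sup>+ y. E (snd z) y \<partial>P \<partial>joint prior K X)"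
    by (rule Fubini') (simp add: case_prod_beta)
  also have "\<dots> = (\<integral>\<^sup>+ \<theta>. \<integral>\<^sup>+ x. \<integral>\<^sup>+ y. E x y \<partial>P \<partial>K \<theta> \<partial>prior)"
    by (rule nn_integral_joint_snd) measurable
  finally show "(\<integral>\<^sup>+ y. \<integral>\<^sup>+ z. E (snd z) y \<partial>joint prior K X \<partial>P) = (\<integral>\<^sup>+ \<theta>. \<integral>\<^sup>+ x. \<integral>\<^sup>+ y. E x y \<partial>P \<partial>K \<theta> \<partial>prior)" .
qed

lemma exists_event_joint_nn_integrals_bounded:
  fixes P :: "'y measure" and E E' :: "'x \<Rightarrow> 'y \<Rightarrow> ennreal"
  assumes P: "prob_space P"
    and E[measurable]: "case_prod E \<in> borel_measurable (X \<Otimes>\<^sub>M P)"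
    and E'[measurable]: "case_prod E' \<in> borel_measurable (X \<Otimes>\<^sub>M P)"
    and "(\<integral>\<^sup>+ \<theta>. \<integral>\<^sup>+ x. \<integral>\<^sup>+ y. E x y \<partial>P \<partial>K \<theta> \<partial>prior) \<le> ennreal a"
    and "(\<integral>\<^sup>+ \<theta>. \<integral>\<^sup>+ x. \<integral>\<^sup>+ y. E' x y \<partial>P \<partial>K \<theta> \<partial>prior) \<le> ennreal a"
    and "0 < a" "0 < \<epsilon>"
  shows "\<exists>A\<in>sets P. 1 - \<epsilon> \<le> measure P A \<and> (\<forall>y\<in>A.
    (\<integral>\<^sup>+ z. E (snd z) y \<partial>joint prior K X) \<le> ennreal (2 * a / \<epsilon>) \<and>
    (\<integral>\<^sup>+ z. E' (snd z) y \<partial>joint prior K X) \<le> ennreal (2 * a / \<epsilon>))"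
proof -
  interpret P: prob_space P by fact
  note Fubini = nn_integral_joint_Fubini[OF P.sigma_finite_measure_axioms]
  show ?thesis
    using assms(4-) unfolding Fubini(2)[OF E, symmetric] Fubini(2)[OF E', symmetric]
    by (rule P.exists_event_both_nn_integrals_bounded[OF Fubini(1)[OF E] Fubini(1)[OF E']])
qed

end

theorem mainTheorem5:
  fixes prior :: "'t measure"
    and MX :: "'x measure" and PY :: "'y measure"
    and K :: "'t \<Rightarrow> (nat \<Rightarrow> 'x) measure"
    and SX :: "(nat \<Rightarrow> 'x) \<Rightarrow> 's::{metric_space, second_countable_topology}"
    and SY :: "(nat \<Rightarrow> 'y) \<Rightarrow> 's"
    and f :: "nat \<Rightarrow> real \<Rightarrow> real"
    and I :: "real set"
    and n :: nat and lam \<epsilon> :: real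
  defines "Xn \<equiv> PiM {..<n} (\<lambda>_. MX)"
    and "P \<equiv> PiM {..<n} (\<lambda>_. PY)"
  assumes prior: "prob_space prior"
    and PY: "prob_space PY"
    and K: "K \<in> prior \<rightarrow>\<^sub>M prob_algebra Xn"
    and SX: "SX \<in> borel_measurable Xn"
    and SY: "SY \<in> borel_measurable P"
    and I: "I \<subseteq> {0<..}"
    and f_nonneg: "\<forall>m. \<forall>l\<in>I. 0 \<le> f m l"
    and A1: "\<forall>l\<in>I.
        (\<integral>\<^sup>+ \<theta>. \<integral>\<^sup>+ x. \<integral>\<^sup>+ y. exp_neg_shift l (dist (SX x) (SY y)) (PD P SX SY x) \<partial>P \<partial>K \<theta> \<partial>prior)
          \<le> ennreal (exp (f n l))
      \<and> (\<integral>\<^sup>+ \<theta>. \<integral>\<^sup>+ x. \<integral>\<^sup>+ y. exp_pos_shift l (dist (SX x) (SY y)) (PD P SX SY x) \<partial>P \<partial>K \<theta> \<partial>prior)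
          \<le> ennreal (exp (f n l))"
    and lam: "lam \<in> I"
    and n: "1 \<le> n"
    and eps: "0 < \<epsilon>" "\<epsilon> < 1"
  shows "\<exists>A \<in> sets P. measure P A \<ge> 1 - \<epsilon> \<and>
    (\<forall>y\<in>A.
      (\<integral>\<^sup>+ z. PD P SX SY (snd z) \<partial>abc_post (joint prior K Xn) SX SY lam y)
      \<le> (INF \<rho>\<in>{\<rho>. prob_space \<rho> \<and> sets \<rho> = sets (prior \<Otimes>\<^sub>M Xn)}.
            (\<integral>\<^sup>+ z. PD P SX SY (snd z) \<partial>\<rho>) + ennreal (2 / lam) * KLdiv \<rho> (joint prior K Xn))
        + ennreal (2 * f n lam / lam) + ennreal (2 / lam * ln (2 / \<epsilon>)))"
proof -
  have P: "prob_space P" unfolding P_def by (intro prob_space_PiM PY)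
  then interpret P: prob_space P .
  have lam0: "0 < lam" and f0: "0 \<le> f n lam" using lam I f_nonneg by auto
  note [measurable] = SX SY
  have [measurable]: "PD P SX SY \<in> borel_measurable Xn" unfolding PD_def[abs_def] by measurable
  define c where "c = 2 * exp (f n lam) / \<epsilon>"
  have "1 \<le> exp (f n lam)" using f0 by simp
  then have c: "1 \<le> c" using eps by (simp add: c_def le_divide_eq, linarith)
  obtain A where A: "A \<in> sets P" "1 - \<epsilon> \<le> measure P A" and bounded: "\<forall>y\<in>A.
      (\<integral>\<^sup>+ z. exp_neg_shift lam (dist (SX (snd z)) (SY y)) (PD P SX SY (snd z)) \<partial>joint prior K Xn) \<le> c \<and>
      (\<integral>\<^sup>+ z. exp_pos_shift lam (dist (SX (snd z)) (SY y)) (PD P SX SY (snd z)) \<partial>joint prior K Xn) \<le> c"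
    using exists_event_joint_nn_integrals_bounded[where a = "exp (f n lam)" and \<epsilon> = \<epsilon>
        and E = "\<lambda>x y. exp_neg_shift lam (dist (SX x) (SY y)) (PD P SX SY x)"
        and E' = "\<lambda>x y. exp_pos_shift lam (dist (SX x) (SY y)) (PD P SX SY x)", OF prior K P] A1 lam eps
    unfolding c_def by (simp, blast)
  have "2 * ln c / lam = 2 * f n lam / lam + 2 / lam * ln (2 / \<epsilon>)"
    using eps by (simp add: c_def ln_div ln_mult add_divide_distrib diff_divide_distrib)
  then have split: "ennreal (2 * ln c / lam) = ennreal (2 * f n lam / lam) + ennreal (2 / lam * ln (2 / \<epsilon>))"
    using lam0 f0 eps by (simp add: ennreal_plus)
  have meas: "(\<lambda>z. SX (snd z)) \<in> borel_measurable (joint prior K Xn)"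
    "(\<lambda>z. PD P SX SY (snd z)) \<in> borel_measurable (joint prior K Xn)"
    unfolding measurable_cong_sets[OF sets_joint[OF prior K] refl] by measurable
  show ?thesis
    unfolding add.assoc split[symmetric] sets_joint[OF prior K, symmetric]
    by (intro bexI[OF _ A(1)] conjI ballI A(2) abc_post_oracle_ineq[OF prob_space_joint[OF prior K] meas lam0 c])
      (use bounded in blast)+
qed

end
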